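(* Let $G$ be a connected $(2K_2, HVN)$-free graph. Then either $G$ is $(2K_2,\text{diamond})$-free, or there exists a partition $(V_1,V_2,V_3,V_4)$ of $V(G)$ (parts possibly empty) such that (i) $G[V_1]$ is a $(2K_2,\text{paw})$-free graph with $\omega(G[V_1])\le\omega(G)-1$, and (ii) $V_i$ is an independent set for each $i\in\{2,3,4\}$.
   Context: All graphs are finite, simple and undirected. $2K_2$ is the disjoint union of two edges. A diamond is $K_4$ minus an edge. A paw is the graph on $\{a,b,c,d\}$ with edges $ab,bc,ac,ad$. $HVN$ is the graph $K_1+\text{paw}$, i.e., a $K_4$ together with one further vertex adjacent to exactly two vertices of the $K_4$. A graph is $\mathcal F$-free if it has no induced subgraph isomorphic to a member of $\mathcal F$. $G[S]$ is the subgraph induced by $S$; $\omega$ is the clique number. *)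

theory Defs
  imports Main
begin

definition simple_graph :: "'a set \<Rightarrow> ('a \<Rightarrow> 'a \<Rightarrow> bool) \<Rightarrow> bool" where
  "simple_graph V E \<longleftrightarrow> finite V \<and> (\<forall>x y. E x y \<longrightarrow> x \<in> V \<and> y \<in> V)
     \<and> (\<forall>x y. E x y \<longrightarrow> E y x) \<and> (\<forall>x. \<not> E x x)"

text \<open>Induced subgraph G[S] is (S, E restricted to S). G[S] contains an induced copy of
  the pattern graph (HV, HE) iff there is an injection of HV into S preserving adjacency and
  non-adjacency.\<close>
definition has_induced :: "'b set \<Rightarrow> ('b \<Rightarrow> 'b \<Rightarrow> bool) \<Rightarrow> 'a set \<Rightarrow> ('a \<Rightarrow> 'a \<Rightarrow> bool) \<Rightarrow> bool" where
  "has_induced HV HE S E \<longleftrightarrow> (\<exists>f. inj_on f HV \<and> f ` HV \<subseteq> S \<and>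
      (\<forall>x\<in>HV. \<forall>y\<in>HV. HE x y \<longleftrightarrow> E (f x) (f y)))"

definition edges_of :: "(nat \<times> nat) list \<Rightarrow> nat \<Rightarrow> nat \<Rightarrow> bool" where
  "edges_of L x y \<longleftrightarrow> (x, y) \<in> set L \<or> (y, x) \<in> set L"

definition twoK2_E :: "nat \<Rightarrow> nat \<Rightarrow> bool" where
  "twoK2_E = edges_of [(0,1),(2,3)]"

definition diamond_E :: "nat \<Rightarrow> nat \<Rightarrow> bool" where
  "diamond_E = edges_of [(0,1),(0,2),(0,3),(1,2),(1,3)]"

definition paw_E :: "nat \<Rightarrow> nat \<Rightarrow> bool" where
  "paw_E = edges_of [(0,1),(1,2),(0,2),(0,3)]"

text \<open>HVN: K4 on {0,1,2,3} plus vertex 4 adjacent to exactly 0 and 1.\<close>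
definition HVN_E :: "nat \<Rightarrow> nat \<Rightarrow> bool" where
  "HVN_E = edges_of [(0,1),(0,2),(0,3),(1,2),(1,3),(2,3),(4,0),(4,1)]"

definition twoK2_free :: "'a set \<Rightarrow> ('a \<Rightarrow> 'a \<Rightarrow> bool) \<Rightarrow> bool" where
  "twoK2_free S E \<longleftrightarrow> \<not> has_induced {0..<4::nat} twoK2_E S E"

definition diamond_free :: "'a set \<Rightarrow> ('a \<Rightarrow> 'a \<Rightarrow> bool) \<Rightarrow> bool" where
  "diamond_free S E \<longleftrightarrow> \<not> has_induced {0..<4::nat} diamond_E S E"

definition paw_free :: "'a set \<Rightarrow> ('a \<Rightarrow> 'a \<Rightarrow> bool) \<Rightarrow> bool" where
  "paw_free S E \<longleftrightarrow> \<not> has_induced {0..<4::nat} paw_E S E"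

definition HVN_free :: "'a set \<Rightarrow> ('a \<Rightarrow> 'a \<Rightarrow> bool) \<Rightarrow> bool" where
  "HVN_free S E \<longleftrightarrow> \<not> has_induced {0..<5::nat} HVN_E S E"

definition is_clique :: "('a \<Rightarrow> 'a \<Rightarrow> bool) \<Rightarrow> 'a set \<Rightarrow> bool" where
  "is_clique E K \<longleftrightarrow> (\<forall>x\<in>K. \<forall>y\<in>K. x \<noteq> y \<longrightarrow> E x y)"

definition independent :: "('a \<Rightarrow> 'a \<Rightarrow> bool) \<Rightarrow> 'a set \<Rightarrow> bool" where
  "independent E I \<longleftrightarrow> (\<forall>x\<in>I. \<forall>y\<in>I. \<not> E x y)"

text \<open>Clique number of G[S] (S finite).\<close>
definition clique_number :: "'a set \<Rightarrow> ('a \<Rightarrow> 'a \<Rightarrow> bool) \<Rightarrow> nat" where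
  "clique_number S E = Max {card K | K. K \<subseteq> S \<and> is_clique E K}"

text \<open>Connected: any two vertices joined by a walk in G (the empty graph counts as connected).\<close>
definition connected_graph :: "'a set \<Rightarrow> ('a \<Rightarrow> 'a \<Rightarrow> bool) \<Rightarrow> bool" where
  "connected_graph V E \<longleftrightarrow> (\<forall>u\<in>V. \<forall>v\<in>V. (\<lambda>x y. E x y \<and> x \<in> V \<and> y \<in> V)\<^sup>*\<^sup>* u v)"

end

theory Submission
  imports Defs
begin

text \<open>Let \<open>\<omega>\<close> be the clique number. If \<open>\<omega> \<le> 2\<close> the graph is triangle-free, hence
  diamond-free. If \<open>\<omega> = 3\<close>, fix a triangle \<open>abc\<close>: the neighbourhood of \<open>a\<close> has clique number
  at most 2, hence is paw-free; among the non-neighbours of \<open>a\<close>, those missing \<open>b\<close> and those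
  seeing \<open>b\<close> but missing \<open>c\<close> are independent by \<open>2K\<^sub>2\<close>-freeness (against the edges \<open>ab\<close> and
  \<open>ac\<close>), and the common neighbours of \<open>b\<close> and \<open>c\<close> are independent as \<open>\<omega> = 3\<close>.
  If \<open>\<omega> \<ge> 4\<close>, fix a maximum clique \<open>Q\<close> and \<open>q\<^sub>1 \<in> Q\<close>. The vertices with at most one neighbour
  in \<open>Q\<close> are independent by \<open>2K\<^sub>2\<close>-freeness, and the vertices adjacent to exactly \<open>Q - {q\<^sub>1}\<close> by
  maximality of \<open>Q\<close>. By HVN-freeness every other vertex misses exactly one vertex of
  \<open>Q - {q\<^sub>1}\<close>, and two such vertices are adjacent iff they miss different vertices; so they induce a
  complete multipartite graph with at most \<open>\<omega> - 1\<close> parts, which is paw-free.\<close>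

lemma simple_graph_finite: "simple_graph V E \<Longrightarrow> finite V"
  and simple_graph_sym: "simple_graph V E \<Longrightarrow> E x y \<Longrightarrow> E y x"
  and simple_graph_irrefl: "simple_graph V E \<Longrightarrow> \<not> E x x"
  and simple_graph_edge_in: "simple_graph V E \<Longrightarrow> E x y \<Longrightarrow> x \<in> V"
  unfolding simple_graph_def by blast+

lemma has_induced_listI:
  assumes "length xs = n" "distinct xs" "set xs \<subseteq> S"
    and "\<forall>i\<in>set [0..<n]. \<forall>j\<in>set [0..<n]. HE i j \<longleftrightarrow> E (xs ! i) (xs ! j)"
  shows "has_induced {0..<n} HE S E"
  unfolding has_induced_def
  using assms by (intro exI[of _ "nth xs"]) (auto intro: inj_on_nth)

text \<open>The patterns are given by their edges and non-edges only: distinctness of the vertices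
  follows from irreflexivity.\<close>

lemma twoK2_freeD:
  assumes G: "simple_graph V E" and "twoK2_free V E"
    and "E x y" "E u w" "\<not> E x u" "\<not> E x w" "\<not> E y u" "\<not> E y w"
  shows False
proof -
  have "E y x" "E w u" "\<not> E u x" "\<not> E w x" "\<not> E u y" "\<not> E w y"
    using assms(3-8) simple_graph_sym[OF G] by blast+
  moreover have "x \<in> V" "y \<in> V" "u \<in> V" "w \<in> V"
    using assms(3,4) simple_graph_edge_in[OF G] simple_graph_sym[OF G] by blast+
  moreover have "\<not> E x x" "\<not> E y y" "\<not> E u u" "\<not> E w w"
    using simple_graph_irrefl[OF G] by blast+
  ultimately have "has_induced {0..<4} twoK2_E V E"
    using assms(3-8)
    by (intro has_induced_listI[of "[x, y, u, w]"]) (auto simp: upt_rec twoK2_E_def edges_of_def)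
  with assms(2) show False by (simp add: twoK2_free_def)
qed

lemma HVN_freeD:
  assumes G: "simple_graph V E" and "HVN_free V E"
    and "E s t" "E s u" "E s w" "E t u" "E t w" "E u w" "E x s" "E x t" "\<not> E x u" "\<not> E x w"
  shows False
proof -
  have "E t s" "E u s" "E w s" "E u t" "E w t" "E w u" "E s x" "E t x" "\<not> E u x" "\<not> E w x"
    using assms(3-12) simple_graph_sym[OF G] by blast+
  moreover have "s \<in> V" "t \<in> V" "u \<in> V" "w \<in> V" "x \<in> V"
    using assms(3-12) simple_graph_edge_in[OF G] simple_graph_sym[OF G] by blast+
  moreover have "\<not> E s s" "\<not> E t t" "\<not> E u u" "\<not> E w w" "\<not> E x x"
    using simple_graph_irrefl[OF G] by blast+
  ultimately have "has_induced {0..<5} HVN_E V E"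
    using assms(3-12)
    by (intro has_induced_listI[of "[s, t, u, w, x]"]) (auto simp: upt_rec HVN_E_def edges_of_def)
  with assms(2) show False by (simp add: HVN_free_def)
qed

lemma twoK2_free_subset: "twoK2_free V E \<Longrightarrow> S \<subseteq> V \<Longrightarrow> twoK2_free S E"
  unfolding twoK2_free_def has_induced_def by (meson subset_trans)

lemma is_clique_insertI:
  assumes G: "simple_graph V E" and "is_clique E K" "\<And>k. k \<in> K \<Longrightarrow> E x k"
  shows "is_clique E (insert x K)"
  using assms simple_graph_sym[OF G] unfolding is_clique_def by blast

lemma finite_clique_cards: "finite S \<Longrightarrow> finite {card K | K. K \<subseteq> S \<and> is_clique E K}"
  by (rule finite_subset[of _ "card ` Pow S"]) auto

lemma clique_number_ge: "finite S \<Longrightarrow> K \<subseteq> S \<Longrightarrow> is_clique E K \<Longrightarrow> card K \<le> clique_number S E"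
  unfolding clique_number_def by (rule Max_ge) (auto intro: finite_clique_cards)

lemma clique_number_leI:
  assumes "finite S" "\<And>K. K \<subseteq> S \<Longrightarrow> is_clique E K \<Longrightarrow> card K \<le> n"
  shows "clique_number S E \<le> n"
  unfolding clique_number_def using assms
  by (intro Max.boundedI finite_clique_cards) (auto intro: exI[of _ "{}"] simp: is_clique_def)

definition maximum_clique :: "'a set \<Rightarrow> ('a \<Rightarrow> 'a \<Rightarrow> bool) \<Rightarrow> 'a set \<Rightarrow> bool" where
  "maximum_clique V E Q \<longleftrightarrow> Q \<subseteq> V \<and> is_clique E Q \<and> card Q = clique_number V E"

lemma ex_maximum_clique: "finite V \<Longrightarrow> \<exists>Q. maximum_clique V E Q"
proof -
  assume "finite V"
  moreover have "{} \<subseteq> V \<and> is_clique E {}" by (simp add: is_clique_def)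
  ultimately have "clique_number V E \<in> {card K | K. K \<subseteq> V \<and> is_clique E K}"
    unfolding clique_number_def by (intro Max_in finite_clique_cards) auto
  then show ?thesis unfolding maximum_clique_def by auto
qed

lemma maximum_clique_finite: "simple_graph V E \<Longrightarrow> maximum_clique V E Q \<Longrightarrow> finite Q"
  unfolding maximum_clique_def using simple_graph_finite finite_subset by blast

lemma has_induced_triangle:
  assumes G: "simple_graph V E" and "has_induced HV HE S E"
    and "i \<in> HV" "j \<in> HV" "k \<in> HV" "HE i j" "HE i k" "HE j k"
  shows "\<exists>K\<subseteq>S. is_clique E K \<and> card K = 3"
proof -
  obtain f where f: "f ` HV \<subseteq> S" "\<forall>x\<in>HV. \<forall>y\<in>HV. HE x y \<longleftrightarrow> E (f x) (f y)"
    using assms(2) unfolding has_induced_def by blast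
  then have "E (f i) (f j)" "E (f i) (f k)" "E (f j) (f k)" using assms(3-8) by blast+
  then have "is_clique E {f i, f j, f k}" "card {f i, f j, f k} = 3"
    using simple_graph_sym[OF G] simple_graph_irrefl[OF G]
    by (auto simp: is_clique_def card_insert_if)
  moreover have "{f i, f j, f k} \<subseteq> S" using f(1) assms(3-5) by blast
  ultimately show ?thesis by blast
qed

lemma diamond_free_if_clique_number_le_2:
  assumes G: "simple_graph V E" and "finite S" "clique_number S E \<le> 2"
  shows "diamond_free S E"
  unfolding diamond_free_def
proof
  assume "has_induced {0..<4::nat} diamond_E S E"
  from has_induced_triangle[OF G this, of 0 1 2]
  obtain K where K: "K \<subseteq> S" "is_clique E K" "card K = 3"
    by (simp add: diamond_E_def edges_of_def) blast
  then show False using clique_number_ge[OF assms(2) K(1,2)] assms(3) by simp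
qed

lemma paw_free_if_clique_number_le_2:
  assumes G: "simple_graph V E" and "finite S" "clique_number S E \<le> 2"
  shows "paw_free S E"
  unfolding paw_free_def
proof
  assume "has_induced {0..<4::nat} paw_E S E"
  from has_induced_triangle[OF G this, of 0 1 2]
  obtain K where K: "K \<subseteq> S" "is_clique E K" "card K = 3"
    by (simp add: paw_E_def edges_of_def) blast
  then show False using clique_number_ge[OF assms(2) K(1,2)] assms(3) by simp
qed

lemma complete_multipartite_paw_free:
  assumes "\<forall>x\<in>S. \<forall>y\<in>S. E x y \<longleftrightarrow> c x \<noteq> c y"
  shows "paw_free S E"
  unfolding paw_free_def
proof
  assume "has_induced {0..<4::nat} paw_E S E"
  then obtain f where f: "f ` {0..<4} \<subseteq> S" "\<forall>x\<in>{0..<4}. \<forall>y\<in>{0..<4}. paw_E x y \<longleftrightarrow> E (f x) (f y)"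
    unfolding has_induced_def by blast
  then have "paw_E i j \<longleftrightarrow> E (f i) (f j)" if "i < 4" "j < 4" for i j
    using that by simp
  from this[of 1 2] this[of 1 3] this[of 2 3]
  have "E (f 1) (f 2)" "\<not> E (f 1) (f 3)" "\<not> E (f 2) (f 3)"
    by (simp_all add: paw_E_def edges_of_def)
  moreover have "f 1 \<in> S" "f 2 \<in> S" "f 3 \<in> S" using f(1) by auto
  ultimately show False using assms by metis
qed

lemma complete_multipartite_clique_number_le:
  assumes "finite S" "\<forall>x\<in>S. \<forall>y\<in>S. E x y \<longleftrightarrow> c x \<noteq> c y"
    and "c ` S \<subseteq> T" "finite T"
  shows "clique_number S E \<le> card T"
proof (rule clique_number_leI[OF assms(1)])
  fix K assume K: "K \<subseteq> S" "is_clique E K"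
  then have "inj_on c K" using assms(2) unfolding is_clique_def inj_on_def by blast
  then have "card K = card (c ` K)" by (simp add: card_image)
  also have "\<dots> \<le> card T" using K(1) assms(3,4) by (intro card_mono) auto
  finally show "card K \<le> card T" .
qed

lemma clique_number_neighbourhood_le:
  assumes G: "simple_graph V E" and "a \<in> V"
  shows "clique_number {x\<in>V. E a x} E \<le> clique_number V E - 1"
proof (rule clique_number_leI)
  show "finite {x\<in>V. E a x}" using simple_graph_finite[OF G] by simp
  fix K assume K: "K \<subseteq> {x\<in>V. E a x}" "is_clique E K"
  then have "is_clique E (insert a K)"
    using simple_graph_sym[OF G] by (intro is_clique_insertI[OF G]) auto
  then have "card (insert a K) \<le> clique_number V E"
    using K(1) assms(2) by (intro clique_number_ge[OF simple_graph_finite[OF G]]) auto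
  moreover have "a \<notin> K" "finite K"
    using K(1) simple_graph_irrefl[OF G] simple_graph_finite[OF G] finite_subset by fastforce+
  ultimately show "card K \<le> clique_number V E - 1" by simp
qed

lemma common_neighbours_independent:
  assumes G: "simple_graph V E" and "K \<subseteq> V" "is_clique E K" "clique_number V E \<le> card K + 1"
  shows "independent E {x. \<forall>k\<in>K. E x k}"
  unfolding independent_def
proof (intro ballI notI)
  fix x y assume x: "x \<in> {x. \<forall>k\<in>K. E x k}" and y: "y \<in> {x. \<forall>k\<in>K. E x k}" and "E x y"
  then have "is_clique E (insert x (insert y K))"
    using simple_graph_sym[OF G] by (intro is_clique_insertI[OF G] assms(3)) auto
  then have "card (insert x (insert y K)) \<le> clique_number V E"
    using \<open>E x y\<close> assms(2) simple_graph_edge_in[OF G] simple_graph_sym[OF G]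
    by (intro clique_number_ge[OF simple_graph_finite[OF G]]) blast+
  moreover have "x \<notin> K" "y \<notin> K" "x \<noteq> y" "finite K"
    using x y \<open>E x y\<close> simple_graph_irrefl[OF G] assms(2) simple_graph_finite[OF G] finite_subset
    by fastforce+
  ultimately show False using assms(4) by simp
qed

lemma twoK2_free_non_neighbours_independent:
  assumes G: "simple_graph V E" and "twoK2_free V E" "E a b"
  shows "independent E {x. \<not> E a x \<and> \<not> E b x}"
  unfolding independent_def
  using twoK2_freeD[OF G assms(2) _ assms(3)] simple_graph_sym[OF G] by blast

lemma maximum_clique_non_neighbour:
  assumes G: "simple_graph V E" and Q: "maximum_clique V E Q" and "x \<in> V"
  shows "\<exists>u\<in>Q. \<not> E x u"
proof (cases "x \<in> Q")
  case True
  then show ?thesis using simple_graph_irrefl[OF G] by blast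
next
  case False
  show ?thesis
  proof (rule ccontr)
    assume "\<not> ?thesis"
    then have "is_clique E (insert x Q)"
      using Q by (intro is_clique_insertI[OF G]) (auto simp: maximum_clique_def)
    then have "card (insert x Q) \<le> clique_number V E"
      using Q \<open>x \<in> V\<close> by (intro clique_number_ge[OF simple_graph_finite[OF G]])
        (auto simp: maximum_clique_def)
    with False Q maximum_clique_finite[OF G Q] show False by (simp add: maximum_clique_def)
  qed
qed

lemma HVN_free_clique_non_neighbour_unique:
  assumes G: "simple_graph V E" and "HVN_free V E" and Q: "is_clique E Q"
    and "s \<in> Q" "t \<in> Q" "s \<noteq> t" "E x s" "E x t"
    and "u \<in> Q" "w \<in> Q" "\<not> E x u" "\<not> E x w"
  shows "u = w"
proof (rule ccontr)
  assume "u \<noteq> w"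
  moreover have "s \<noteq> u" "s \<noteq> w" "t \<noteq> u" "t \<noteq> w" using assms(7,8,11,12) by blast+
  ultimately show False
    using HVN_freeD[OF G assms(2), of s t u w x] Q assms(4-12) unfolding is_clique_def by blast
qed

lemma two_elements_outside:
  assumes "finite Q" "A \<subseteq> Q" "card A + 2 \<le> card Q"
  shows "\<exists>s\<in>Q - A. \<exists>t\<in>Q - A. s \<noteq> t"
proof -
  have "2 \<le> card (Q - A)" using assms by (simp add: card_Diff_subset finite_subset)
  then show ?thesis using card_le_Suc0_iff_eq[of "Q - A"] assms(1) by fastforce
qed

lemma HVN_free_distinct_non_neighbours_adjacent:
  assumes G: "simple_graph V E" and "HVN_free V E" and Q: "is_clique E Q" "finite Q" "4 \<le> card Q"
    and "u \<in> Q" "v \<in> Q" "u \<noteq> v" "\<forall>q\<in>Q. E x q \<longleftrightarrow> q \<noteq> u" "\<forall>q\<in>Q. E y q \<longleftrightarrow> q \<noteq> v"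
  shows "E x y"
proof (rule ccontr)
  assume "\<not> E x y"
  \<comment> \<open>Then \<open>s, t, x, v\<close> form a \<open>K\<^sub>4\<close> in which \<open>y\<close> sees exactly \<open>s\<close> and \<open>t\<close>.\<close>
  obtain s t where st: "s \<in> Q - {u, v}" "t \<in> Q - {u, v}" "s \<noteq> t"
    using two_elements_outside[OF Q(2), of "{u, v}"] assms(5-8) by auto
  then have "E s t" "E s v" "E t v" "E x s" "E x t" "E x v" "E y s" "E y t"
    using Q(1) assms(7-10) unfolding is_clique_def by auto
  then show False
    using HVN_freeD[OF G assms(2), of s t x v y] simple_graph_sym[OF G] \<open>\<not> E x y\<close> assms(7,10)
    by blast
qed

lemma maximum_clique_exact_non_neighbours_adjacent_iff:
  assumes G: "simple_graph V E" and "HVN_free V E" and Q: "maximum_clique V E Q" "4 \<le> card Q"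
    and "u \<in> Q" "v \<in> Q" "\<forall>q\<in>Q. E x q \<longleftrightarrow> q \<noteq> u" "\<forall>q\<in>Q. E y q \<longleftrightarrow> q \<noteq> v"
  shows "E x y \<longleftrightarrow> u \<noteq> v"
proof
  assume "E x y"
  show "u \<noteq> v"
  proof
    assume "u = v"
    have "independent E {z. \<forall>k\<in>Q - {u}. E z k}"
      using Q(1) \<open>u \<in> Q\<close> maximum_clique_finite[OF G Q(1)]
      by (intro common_neighbours_independent[OF G]) (auto simp: maximum_clique_def is_clique_def)
    then show False using \<open>E x y\<close> \<open>u = v\<close> assms(7,8) unfolding independent_def by blast
  qed
next
  assume "u \<noteq> v"
  then show "E x y"
    using Q assms(5-8) maximum_clique_finite[OF G Q(1)]
    by (intro HVN_free_distinct_non_neighbours_adjacent[OF G assms(2)]) (auto simp: maximum_clique_def)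
qed

lemma maximum_clique_exact_non_neighbour:
  assumes G: "simple_graph V E" and "HVN_free V E" and Q: "maximum_clique V E Q" and "x \<in> V"
    and "1 < card {q\<in>Q. E x q}"
  shows "\<exists>u\<in>Q. \<forall>q\<in>Q. E x q \<longleftrightarrow> q \<noteq> u"
proof -
  obtain s t where st: "s \<in> Q" "t \<in> Q" "s \<noteq> t" "E x s" "E x t"
    using assms(5) card_le_Suc0_iff_eq[of "{q\<in>Q. E x q}"] maximum_clique_finite[OF G Q] by auto
  obtain u where "u \<in> Q" "\<not> E x u" using maximum_clique_non_neighbour[OF G Q \<open>x \<in> V\<close>] by blast
  moreover have "q = u" if "q \<in> Q" "\<not> E x q" for q
    using HVN_free_clique_non_neighbour_unique[OF G assms(2) _ st, of q u] that Q \<open>u \<in> Q\<close> \<open>\<not> E x u\<close>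
    by (auto simp: maximum_clique_def)
  ultimately show ?thesis by blast
qed

lemma maximum_clique_HVN_free_complete_multipartite:
  assumes G: "simple_graph V E" and "HVN_free V E" and Q: "maximum_clique V E Q" "4 \<le> card Q"
    and S: "S \<subseteq> {x\<in>V. 1 < card {q\<in>Q. E x q} \<and> \<not> (\<forall>q\<in>Q. E x q \<longleftrightarrow> q \<noteq> q1)}"
  shows "\<exists>c. c ` S \<subseteq> Q - {q1} \<and> (\<forall>x\<in>S. \<forall>y\<in>S. E x y \<longleftrightarrow> c x \<noteq> c y)"
proof -
  have "\<exists>u\<in>Q - {q1}. \<forall>q\<in>Q. E x q \<longleftrightarrow> q \<noteq> u" if x: "x \<in> S" for x
  proof -
    obtain u where "u \<in> Q" "\<forall>q\<in>Q. E x q \<longleftrightarrow> q \<noteq> u"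
      using maximum_clique_exact_non_neighbour[OF G assms(2) Q(1)] S x by blast
    moreover from this have "u \<noteq> q1" using S x by auto
    ultimately show ?thesis by blast
  qed
  then obtain c where c: "c x \<in> Q - {q1}" "\<forall>q\<in>Q. E x q \<longleftrightarrow> q \<noteq> c x" if "x \<in> S" for x
    by metis
  have "E x y \<longleftrightarrow> c x \<noteq> c y" if "x \<in> S" "y \<in> S" for x y
    using c[OF that(1)] c[OF that(2)]
    by (intro maximum_clique_exact_non_neighbours_adjacent_iff[OF G assms(2) Q]) auto
  with c(1) show ?thesis by blast
qed

lemma twoK2_free_few_clique_neighbours_independent:
  assumes G: "simple_graph V E" and "twoK2_free V E" and Q: "is_clique E Q" "finite Q" "4 \<le> card Q"
  shows "independent E {x. card {q\<in>Q. E x q} \<le> 1}"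
  unfolding independent_def
proof (intro ballI notI)
  fix x y assume x: "x \<in> {x. card {q\<in>Q. E x q} \<le> 1}" and y: "y \<in> {x. card {q\<in>Q. E x q} \<le> 1}"
    and "E x y"
  let ?A = "{q\<in>Q. E x q} \<union> {q\<in>Q. E y q}"
  have "card ?A \<le> 2"
    using card_Un_le[of "{q\<in>Q. E x q}" "{q\<in>Q. E y q}"] x y by simp
  then have "card ?A + 2 \<le> card Q" using Q(3) by linarith
  then obtain s t where "s \<in> Q - ?A" "t \<in> Q - ?A" "s \<noteq> t"
    using two_elements_outside[OF Q(2), of ?A] by blast
  then have "E s t" "\<not> E x s" "\<not> E x t" "\<not> E y s" "\<not> E y t"
    using Q(1) unfolding is_clique_def by auto
  then show False using twoK2_freeD[OF G assms(2) \<open>E x y\<close>] by blast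
qed

definition paw_free_three_independent_partition :: "'a set \<Rightarrow> ('a \<Rightarrow> 'a \<Rightarrow> bool) \<Rightarrow> bool" where
  "paw_free_three_independent_partition V E \<longleftrightarrow>
    (\<exists>V1 V2 V3 V4.
        V1 \<union> V2 \<union> V3 \<union> V4 = V \<and>
        V1 \<inter> V2 = {} \<and> V1 \<inter> V3 = {} \<and> V1 \<inter> V4 = {} \<and>
        V2 \<inter> V3 = {} \<and> V2 \<inter> V4 = {} \<and> V3 \<inter> V4 = {} \<and>
        twoK2_free V1 E \<and> paw_free V1 E \<and>
        clique_number V1 E \<le> clique_number V E - 1 \<and>
        independent E V2 \<and> independent E V3 \<and> independent E V4)"

lemma partition_if_clique_number_3:
  assumes G: "simple_graph V E" and "twoK2_free V E" and \<omega>: "clique_number V E = 3"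
  shows "paw_free_three_independent_partition V E"
proof -
  obtain Q where Q: "maximum_clique V E Q"
    using ex_maximum_clique simple_graph_finite[OF G] by blast
  then obtain a b c where "Q = {a, b, c}" "a \<noteq> b" "a \<noteq> c" "b \<noteq> c"
    using \<omega> by (auto simp: maximum_clique_def card_3_iff)
  then have abc: "a \<in> V" "E a b" "E a c" "E b c" "{b, c} \<subseteq> V" "is_clique E {b, c}"
    using Q by (auto simp: maximum_clique_def is_clique_def)
  define V1 where "V1 = {x\<in>V. E a x}"
  define V2 where "V2 = {x\<in>V. \<not> E a x \<and> \<not> E b x}"
  define V3 where "V3 = {x\<in>V. \<not> E a x \<and> E b x \<and> \<not> E c x}"
  define V4 where "V4 = {x\<in>V. \<not> E a x \<and> E b x \<and> E c x}"
  have "V1 \<union> V2 \<union> V3 \<union> V4 = V" "V1 \<inter> V2 = {}" "V1 \<inter> V3 = {}" "V1 \<inter> V4 = {}"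
    "V2 \<inter> V3 = {}" "V2 \<inter> V4 = {}" "V3 \<inter> V4 = {}"
    unfolding V1_def V2_def V3_def V4_def by auto
  moreover have "twoK2_free V1 E" using twoK2_free_subset[OF assms(2), of V1] by (auto simp: V1_def)
  moreover have "clique_number V1 E \<le> clique_number V E - 1"
    unfolding V1_def using clique_number_neighbourhood_le[OF G abc(1)] .
  moreover from this have "paw_free V1 E"
    using \<omega> simple_graph_finite[OF G] by (intro paw_free_if_clique_number_le_2[OF G]) (auto simp: V1_def)
  moreover have "independent E V2"
    using twoK2_free_non_neighbours_independent[OF G assms(2) abc(2)]
    unfolding independent_def V2_def by blast
  moreover have "independent E V3"
    using twoK2_free_non_neighbours_independent[OF G assms(2) abc(3)]
    unfolding independent_def V3_def by blast
  moreover have "independent E V4"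
  proof -
    have "independent E {x. \<forall>k\<in>{b, c}. E x k}"
      using common_neighbours_independent[OF G abc(5,6)] \<omega> \<open>b \<noteq> c\<close> by simp
    moreover have "V4 \<subseteq> {x. \<forall>k\<in>{b, c}. E x k}"
      using simple_graph_sym[OF G] by (auto simp: V4_def)
    ultimately show ?thesis unfolding independent_def by blast
  qed
  ultimately show ?thesis
    unfolding paw_free_three_independent_partition_def
    by (intro exI[of _ V1] exI[of _ V2] exI[of _ V3] exI[of _ V4]) simp
qed

lemma partition_if_clique_number_ge_4:
  assumes G: "simple_graph V E" and "twoK2_free V E" "HVN_free V E" and \<omega>: "4 \<le> clique_number V E"
  shows "paw_free_three_independent_partition V E"
proof -
  obtain Q where Q: "maximum_clique V E Q"
    using ex_maximum_clique simple_graph_finite[OF G] by blast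
  then have QV: "Q \<subseteq> V" and QK: "is_clique E Q" and cardQ: "card Q = clique_number V E"
    unfolding maximum_clique_def by blast+
  have finQ: "finite Q" using maximum_clique_finite[OF G Q] .
  obtain q1 where "q1 \<in> Q" using \<omega> cardQ by (metis card.empty ex_in_conv not_numeral_le_zero)
  define V2 where "V2 = {x\<in>V. card {q\<in>Q. E x q} \<le> 1}"
  define V3 where "V3 = {x\<in>V. \<forall>q\<in>Q. E x q \<longleftrightarrow> q \<noteq> q1}"
  define V1 where "V1 = V - V2 - V3"
  have four: "4 \<le> card Q" using \<omega> cardQ by simp
  have "V1 \<subseteq> {x\<in>V. 1 < card {q\<in>Q. E x q} \<and> \<not> (\<forall>q\<in>Q. E x q \<longleftrightarrow> q \<noteq> q1)}"
    by (auto simp: V1_def V2_def V3_def)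
  from maximum_clique_HVN_free_complete_multipartite[OF G assms(3) Q four this]
  obtain c where c: "c ` V1 \<subseteq> Q - {q1}" "\<forall>x\<in>V1. \<forall>y\<in>V1. E x y \<longleftrightarrow> c x \<noteq> c y"
    by blast
  have "finite V1" using simple_graph_finite[OF G] by (simp add: V1_def)
  then have "clique_number V1 E \<le> card (Q - {q1})"
    using complete_multipartite_clique_number_le[OF _ c(2,1)] finQ by simp
  moreover have "paw_free V1 E" using complete_multipartite_paw_free[OF c(2)] .
  moreover have "independent E V2"
  proof -
    have "independent E {x. card {q\<in>Q. E x q} \<le> 1}"
      using \<omega> cardQ by (intro twoK2_free_few_clique_neighbours_independent[OF G assms(2) QK finQ]) simp
    moreover have "V2 \<subseteq> {x. card {q\<in>Q. E x q} \<le> 1}" by (auto simp: V2_def)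
    ultimately show ?thesis unfolding independent_def by blast
  qed
  moreover have "independent E V3"
  proof -
    have "independent E {x. \<forall>k\<in>Q - {q1}. E x k}"
      using QV QK finQ cardQ \<open>q1 \<in> Q\<close>
      by (intro common_neighbours_independent[OF G]) (auto simp: is_clique_def)
    moreover have "V3 \<subseteq> {x. \<forall>k\<in>Q - {q1}. E x k}" by (auto simp: V3_def)
    ultimately show ?thesis unfolding independent_def by blast
  qed
  moreover have "V2 \<inter> V3 = {}"
  proof -
    have "{q\<in>Q. E x q} = Q - {q1}" if "x \<in> V3" for x using that by (auto simp: V3_def)
    then show ?thesis using \<open>q1 \<in> Q\<close> finQ cardQ \<omega> by (auto simp: V2_def)
  qed
  moreover have "V1 \<union> V2 \<union> V3 \<union> {} = V" "V1 \<inter> V2 = {}" "V1 \<inter> V3 = {}"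
    by (auto simp: V1_def V2_def V3_def)
  moreover have "twoK2_free V1 E" using twoK2_free_subset[OF assms(2), of V1] by (auto simp: V1_def)
  moreover have "card (Q - {q1}) = clique_number V E - 1" using \<open>q1 \<in> Q\<close> finQ cardQ by simp
  moreover have "independent E {}" by (simp add: independent_def)
  ultimately show ?thesis
    unfolding paw_free_three_independent_partition_def
    by (intro exI[of _ V1] exI[of _ V2] exI[of _ V3] exI[of _ "{}"]) simp
qed

theorem theorem3p7:
  fixes V :: "'a set" and E :: "'a \<Rightarrow> 'a \<Rightarrow> bool"
  assumes "simple_graph V E"
    and "connected_graph V E"
    and "twoK2_free V E"
    and "HVN_free V E"
  shows "(twoK2_free V E \<and> diamond_free V E) \<or>
    (\<exists>V1 V2 V3 V4.
        V1 \<union> V2 \<union> V3 \<union> V4 = V \<and>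
        V1 \<inter> V2 = {} \<and> V1 \<inter> V3 = {} \<and> V1 \<inter> V4 = {} \<and>
        V2 \<inter> V3 = {} \<and> V2 \<inter> V4 = {} \<and> V3 \<inter> V4 = {} \<and>
        twoK2_free V1 E \<and> paw_free V1 E \<and>
        clique_number V1 E \<le> clique_number V E - 1 \<and>
        independent E V2 \<and> independent E V3 \<and> independent E V4)"
proof -
  consider "clique_number V E \<le> 2" | "clique_number V E = 3" | "4 \<le> clique_number V E"
    by linarith
  then show ?thesis
  proof cases
    case 1
    then have "diamond_free V E"
      using assms(1) by (intro diamond_free_if_clique_number_le_2 simple_graph_finite)
    with assms(3) show ?thesis by blast
  next
    case 2
    then have "paw_free_three_independent_partition V E"
      by (rule partition_if_clique_number_3[OF assms(1,3)])
    then show ?thesis unfolding paw_free_three_independent_partition_def by blast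
  next
    case 3
    then have "paw_free_three_independent_partition V E"
      by (rule partition_if_clique_number_ge_4[OF assms(1,3,4)])
    then show ?thesis unfolding paw_free_three_independent_partition_def by blast
  qed
qed

end
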